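(* For any irrevocable (non-wasteful) distribution policy $\varphi$, when the characteristic functions range over $V_{\ge3}$, the competitive ratio of $\varphi$ with respect to greedy players is at most $\frac{3\mathsf{min}}{\mathsf{max}}$.
   Context: Players: a finite set $N=\{a_1,\dots,a_n\}$. A characteristic function is $v:2^N\to\mathbb{R}_{\ge 0}$ with $v(\emptyset)=0$. There are fixed, known constants $0<\mathsf{min}\le\mathsf{max}$ and every $v$ considered is monotone and bounded: $\mathsf{min}\le v(S)\le v(T)\le\mathsf{max}$ for all nonempty $S\subseteq T\subseteq N$. For an integer $\delta\ge1$, $V_\delta$ denotes the set of such $v$ with $\delta\cdot\mathsf{min}\le\mathsf{max}<(\delta+1)\cdot\mathsf{min}$, and $V_{\ge3}=\bigcup_{\delta\ge3}V_\delta$. A coalition structure is a partition $C$ of $N$; its social welfare is $\mathsf{SW}(C\mid v)=\sum_{S\in C}v(S)$. Online process: an arrival order is a permutation $\pi=(\pi_1,\dots,\pi_n)$ of $N$; player $\pi_t$ arrives at time $t$. For $S\subseteq N$, $\pi_{|S}$ denotes the players of $S$ in the relative order of $\pi$; $\pi_{|S}$ is a prefix of $\pi_{|T}$ if $S\subseteq T$ and the players of $S$ are the first $|S|$ players of $\pi_{|T}$. Let $C^{t-1}$ be the coalition structure of players arrived before time $t$ ($C^0=\emptyset$). At time $t$, player $\pi_t$ either joins an existing coalition $S\in C^{t-1}$ or forms $\{\pi_t\}$ (choice $S=\emptyset$); decisions are never revised. A distribution policy $\varphi$ assigns to every $S\subseteq N$ and order $\pi_{|S}$ a vector $(\varphi_i(S,\pi_{|S}\mid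 v))_{i\in S}$ with $\sum_{i\in S}\varphi_i(S,\pi_{|S})=v(S)$ (non-wasteful). It is irrevocable if for every $\pi$, every $S\subseteq T\subseteq N$ with $\pi_{|S}$ a prefix of $\pi_{|T}$ and every $i\in S$, $\varphi_i(S,\pi_{|S})\le\varphi_i(T,\pi_{|T})$. Greedy players: $\pi_t$ chooses $S^*\in\arg\max_{S\in C^{t-1}\cup\{\emptyset\}}\varphi_{\pi_t}(S\cup\{\pi_t\},\pi_{|S\cup\{\pi_t\}})$ (predetermined tie-breaking). $C_g(v,\pi\mid\varphi)$ is the final structure. The competitive ratio over a class of characteristic functions is $\alpha=\inf_{v,\pi}\mathsf{SW}(C_g(v,\pi\mid\varphi))/\max_C\mathsf{SW}(C\mid v)$, over $v$ in the class (and any number of players) and all arrival orders $\pi$. *)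

theory Defs
  imports Complex_Main "HOL-Library.Disjoint_Sets"
begin

text \<open>Players are natural numbers; a game is a finite set N of players and a
characteristic function v on subsets of N.  The constants mn and mx are the fixed
bounds min and max.\<close>

definition bounded_monotone :: "real \<Rightarrow> real \<Rightarrow> nat set \<Rightarrow> (nat set \<Rightarrow> real) \<Rightarrow> bool" where
  "bounded_monotone mn mx N v \<longleftrightarrow>
     v {} = 0 \<and>
     (\<forall>S \<subseteq> N. v S \<ge> 0) \<and>
     (\<forall>S T. S \<noteq> {} \<and> S \<subseteq> T \<and> T \<subseteq> N \<longrightarrow> mn \<le> v S \<and> v S \<le> v T \<and> v T \<le> mx)"

definition in_V :: "nat \<Rightarrow> real \<Rightarrow> real \<Rightarrow> nat set \<Rightarrow> (nat set \<Rightarrow> real) \<Rightarrow> bool" where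
  "in_V \<delta> mn mx N v \<longleftrightarrow> bounded_monotone mn mx N v \<and>
     real \<delta> * mn \<le> mx \<and> mx < (real \<delta> + 1) * mn"

definition in_V_ge3 :: "real \<Rightarrow> real \<Rightarrow> nat set \<Rightarrow> (nat set \<Rightarrow> real) \<Rightarrow> bool" where
  "in_V_ge3 mn mx N v \<longleftrightarrow> (\<exists>\<delta>\<ge>3. in_V \<delta> mn mx N v)"

definition arrival_order :: "nat set \<Rightarrow> nat list \<Rightarrow> bool" where
  "arrival_order N \<pi> \<longleftrightarrow> distinct \<pi> \<and> set \<pi> = N"

text \<open>A distribution policy: phi N v sigma i is the share of player i in coalition
set sigma, where the distinct list sigma is the order pi restricted to that coalition.\<close>
type_synonym policy = "nat set \<Rightarrow> (nat set \<Rightarrow> real) \<Rightarrow> nat list \<Rightarrow> nat \<Rightarrow> real"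

definition non_wasteful :: "real \<Rightarrow> real \<Rightarrow> policy \<Rightarrow> bool" where
  "non_wasteful mn mx \<phi> \<longleftrightarrow>
     (\<forall>N v \<sigma>. finite N \<and> in_V_ge3 mn mx N v \<and> distinct \<sigma> \<and> set \<sigma> \<subseteq> N \<longrightarrow>
        (\<Sum>i\<in>set \<sigma>. \<phi> N v \<sigma> i) = v (set \<sigma>))"

definition irrevocable :: "real \<Rightarrow> real \<Rightarrow> policy \<Rightarrow> bool" where
  "irrevocable mn mx \<phi> \<longleftrightarrow>
     (\<forall>N v \<sigma> \<rho> i. finite N \<and> in_V_ge3 mn mx N v \<and> distinct (\<sigma> @ \<rho>) \<and> set (\<sigma> @ \<rho>) \<subseteq> N
        \<and> i \<in> set \<sigma> \<longrightarrow> \<phi> N v \<sigma> i \<le> \<phi> N v (\<sigma> @ \<rho>) i)"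

text \<open>Tie-breaking rule: given N, the arrival prefix (including the arriving player),
the current coalition structure and the set of maximising options, pick one of them.\<close>
type_synonym tiebreak = "nat set \<Rightarrow> nat list \<Rightarrow> nat set set \<Rightarrow> nat set set \<Rightarrow> nat set"

definition valid_tiebreak :: "tiebreak \<Rightarrow> bool" where
  "valid_tiebreak sel \<longleftrightarrow> (\<forall>N p C A. A \<noteq> {} \<longrightarrow> sel N p C A \<in> A)"

text \<open>One greedy step: state = (arrived players in order, coalition structure).
The option {} stands for forming a new singleton coalition.\<close>
definition greedy_step :: "policy \<Rightarrow> tiebreak \<Rightarrow> nat set \<Rightarrow> (nat set \<Rightarrow> real)
    \<Rightarrow> nat list \<times> nat set set \<Rightarrow> nat \<Rightarrow> nat list \<times> nat set set" where
  "greedy_step \<phi> sel N v st x =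
     (let p = fst st; C = snd st; p' = p @ [x]; opts = insert {} C;
          val = (\<lambda>S. \<phi> N v (filter (\<lambda>y. y \<in> insert x S) p') x);
          A = {S \<in> opts. \<forall>T \<in> opts. val T \<le> val S};
          S = sel N p' C A
      in (p', insert (insert x S) (C - {S})))"

definition greedy_structure :: "policy \<Rightarrow> tiebreak \<Rightarrow> nat set \<Rightarrow> (nat set \<Rightarrow> real)
    \<Rightarrow> nat list \<Rightarrow> nat set set" where
  "greedy_structure \<phi> sel N v \<pi> = snd (foldl (greedy_step \<phi> sel N v) ([], {}) \<pi>)"

definition SW :: "nat set set \<Rightarrow> (nat set \<Rightarrow> real) \<Rightarrow> real" where
  "SW C v = (\<Sum>S\<in>C. v S)"

definition opt_SW :: "nat set \<Rightarrow> (nat set \<Rightarrow> real) \<Rightarrow> real" where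
  "opt_SW N v = Max ((\<lambda>C. SW C v) ` {C. partition_on N C})"

definition competitive_ratio :: "real \<Rightarrow> real \<Rightarrow> policy \<Rightarrow> tiebreak \<Rightarrow> real" where
  "competitive_ratio mn mx \<phi> sel =
     Inf {SW (greedy_structure \<phi> sel N v \<pi>) v / opt_SW N v | N v \<pi>.
            finite N \<and> N \<noteq> {} \<and> in_V_ge3 mn mx N v \<and> arrival_order N \<pi>}"

end

theory Submission
  imports Defs
begin

(* Take three players and let every nonempty coalition be worth min, except the grand
   coalition, which is worth max.  Non-wastefulness gives a lone player exactly min, and
   irrevocability lets a player keep at least that min after a newcomer joins; so a newcomer
   joining an existing singleton gets at most 0 and strictly prefers to stay alone.  Greedy
   players therefore end up in three singletons, of welfare 3 min, while the grand
   coalition achieves max. *)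

lemma greedy_step_choice:
  assumes "valid_tiebreak sel" and "finite C"
  obtains S where "S \<in> insert {} C"
    and "greedy_step \<phi> sel N v (p, C) x = (p @ [x], insert (insert x S) (C - {S}))"
proof -
  define val where "val S = \<phi> N v (filter (\<lambda>y. y \<in> insert x S) (p @ [x])) x" for S
  define A where "A = {S \<in> insert {} C. \<forall>T \<in> insert {} C. val T \<le> val S}"
  have "arg_min_on (\<lambda>T. - val T) (insert {} C) \<in> A"
    using arg_min_if_finite(1)[of "insert {} C" "\<lambda>T. - val T"]
      arg_min_least[of "insert {} C" _ "\<lambda>T. - val T"] assms(2)
    unfolding A_def by simp
  then have "A \<noteq> {}"
    by blast
  then have "sel N (p @ [x]) C A \<in> A"
    using assms(1) by (simp add: valid_tiebreak_def)
  then show thesis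
    by (intro that[of "sel N (p @ [x]) C A"]) (auto simp: A_def val_def greedy_step_def Let_def)
qed

lemma greedy_step_stay_alone:
  assumes "valid_tiebreak sel" and "{} \<notin> C"
    and "\<And>T. T \<in> C \<Longrightarrow> \<phi> N v (filter (\<lambda>y. y \<in> insert x T) (p @ [x])) x
                         < \<phi> N v (filter (\<lambda>y. y = x) (p @ [x])) x"
  shows "greedy_step \<phi> sel N v (p, C) x = (p @ [x], insert {x} C)"
proof -
  define val where "val S = \<phi> N v (filter (\<lambda>y. y \<in> insert x S) (p @ [x])) x" for S
  have "{S \<in> insert {} C. \<forall>T \<in> insert {} C. val T \<le> val S} = {{}}"
    using assms(3) by (force simp: val_def)
  moreover have "sel N (p @ [x]) C {{}} = {}"
    using assms(1) unfolding valid_tiebreak_def by blast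
  ultimately show ?thesis
    using assms(2) by (simp add: greedy_step_def Let_def val_def)
qed

lemma foldl_greedy_step_coalitions:
  assumes "valid_tiebreak sel" and "finite C" and "\<forall>S\<in>C. S \<subseteq> set p"
  shows "fst (foldl (greedy_step \<phi> sel N v) (p, C) xs) = p @ xs
    \<and> finite (snd (foldl (greedy_step \<phi> sel N v) (p, C) xs))
    \<and> (\<forall>S \<in> snd (foldl (greedy_step \<phi> sel N v) (p, C) xs). S \<subseteq> set p \<union> set xs)"
  using assms(2,3)
proof (induction xs arbitrary: p C)
  case Nil
  then show ?case by simp
next
  case (Cons x xs)
  obtain S where "S \<in> insert {} C"
    and step: "greedy_step \<phi> sel N v (p, C) x = (p @ [x], insert (insert x S) (C - {S}))"
    using greedy_step_choice[OF assms(1) Cons.prems(1)] .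
  then have "finite (insert (insert x S) (C - {S}))"
    and "\<forall>S' \<in> insert (insert x S) (C - {S}). S' \<subseteq> set (p @ [x])"
    using Cons.prems by auto
  from Cons.IH[OF this] show ?case
    by (simp add: step)
qed

lemma greedy_structure_subset:
  assumes "valid_tiebreak sel" and "S \<in> greedy_structure \<phi> sel N v \<pi>"
  shows "S \<subseteq> set \<pi>"
  using foldl_greedy_step_coalitions[OF assms(1), of "{}" "[]" \<phi> N v \<pi>] assms(2)
  by (auto simp: greedy_structure_def)

lemma filter_pair_snoc:
  assumes "distinct xs" and "y \<in> set xs" and "x \<notin> set xs"
  shows "filter (\<lambda>z. z \<in> {x, y}) (xs @ [x]) = [y, x]"
  using assms by (induction xs) (auto simp: filter_empty_conv)

lemma greedy_structure_singletons:
  assumes "valid_tiebreak sel" and "distinct \<pi>"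
    and "\<And>x y. x \<in> set \<pi> \<Longrightarrow> y \<in> set \<pi> \<Longrightarrow> x \<noteq> y \<Longrightarrow> \<phi> N v [y, x] x < \<phi> N v [x] x"
  shows "greedy_structure \<phi> sel N v \<pi> = (\<lambda>x. {x}) ` set \<pi>"
proof -
  have "foldl (greedy_step \<phi> sel N v) ([], {}) \<pi> = (\<pi>, (\<lambda>x. {x}) ` set \<pi>)"
    using assms(2,3)
  proof (induction \<pi> rule: rev_induct)
    case Nil
    then show ?case by simp
  next
    case (snoc x xs)
    have "greedy_step \<phi> sel N v (xs, (\<lambda>x. {x}) ` set xs) x = (xs @ [x], insert {x} ((\<lambda>x. {x}) ` set xs))"
    proof (rule greedy_step_stay_alone[OF assms(1)])
      fix T assume "T \<in> (\<lambda>x. {x}) ` set xs"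
      then obtain y where "T = {y}" "y \<in> set xs" by blast
      moreover have "filter (\<lambda>z. z = x) (xs @ [x]) = [x]"
        using snoc.prems(1) by (auto simp: filter_empty_conv)
      ultimately show "\<phi> N v (filter (\<lambda>z. z \<in> insert x T) (xs @ [x])) x
                     < \<phi> N v (filter (\<lambda>z. z = x) (xs @ [x])) x"
        using snoc.prems filter_pair_snoc[of xs y x] by auto
    qed auto
    then show ?case
      using snoc by simp
  qed
  then show ?thesis
    by (simp add: greedy_structure_def)
qed

lemma SW_greedy_structure_nonneg:
  assumes "valid_tiebreak sel" and "bounded_monotone mn mx N v" and "arrival_order N \<pi>"
  shows "0 \<le> SW (greedy_structure \<phi> sel N v \<pi>) v"
  unfolding SW_def
proof (rule sum_nonneg)
  fix S assume "S \<in> greedy_structure \<phi> sel N v \<pi>"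
  then have "S \<subseteq> N"
    using greedy_structure_subset[OF assms(1)] assms(3) unfolding arrival_order_def by blast
  then show "0 \<le> v S"
    using assms(2) by (simp add: bounded_monotone_def)
qed

lemma SW_le_opt_SW:
  assumes "finite N" and "partition_on N C"
  shows "SW C v \<le> opt_SW N v"
proof -
  have "{C. partition_on N C} \<subseteq> Pow (Pow N)"
    by (auto simp: partition_on_def)
  then have "finite {C. partition_on N C}"
    using assms(1) by (simp add: finite_subset)
  then show ?thesis
    unfolding opt_SW_def using assms(2) by (intro Max_ge) auto
qed

lemma opt_SW_ge_grand_coalition:
  assumes "finite N" and "N \<noteq> {}"
  shows "v N \<le> opt_SW N v"
  using SW_le_opt_SW[OF assms(1), of "{N}" v] assms(2)
  by (simp add: SW_def partition_on_def disjoint_def)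

lemma competitive_ratio_le:
  assumes "valid_tiebreak sel" and "finite N" and "N \<noteq> {}"
    and "in_V_ge3 mn mx N v" and "arrival_order N \<pi>"
  shows "competitive_ratio mn mx \<phi> sel \<le> SW (greedy_structure \<phi> sel N v \<pi>) v / opt_SW N v"
  unfolding competitive_ratio_def
proof (rule cInf_lower)
  show "SW (greedy_structure \<phi> sel N v \<pi>) v / opt_SW N v \<in> {SW (greedy_structure \<phi> sel N v \<pi>) v / opt_SW N v | N v \<pi>.
          finite N \<and> N \<noteq> {} \<and> in_V_ge3 mn mx N v \<and> arrival_order N \<pi>}"
    using assms(2-5) by blast
  show "bdd_below {SW (greedy_structure \<phi> sel N v \<pi>) v / opt_SW N v | N v \<pi>.
          finite N \<and> N \<noteq> {} \<and> in_V_ge3 mn mx N v \<and> arrival_order N \<pi>}"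
  proof (rule bdd_belowI, clarify)
    fix N' v' \<pi>'
    assume "finite N'" "N' \<noteq> {}" "in_V_ge3 mn mx N' v'" "arrival_order N' \<pi>'"
    moreover from this have "bounded_monotone mn mx N' v'"
      by (auto simp: in_V_ge3_def in_V_def)
    moreover from this have "0 \<le> v' N'"
      by (simp add: bounded_monotone_def)
    ultimately show "0 \<le> SW (greedy_structure \<phi> sel N' v' \<pi>') v' / opt_SW N' v'"
      using SW_greedy_structure_nonneg[OF assms(1)] opt_SW_ge_grand_coalition[of N' v']
      by (meson divide_nonneg_nonneg order_trans)
  qed
qed

lemma share_singleton:
  assumes "non_wasteful mn mx \<phi>" and "finite N" and "in_V_ge3 mn mx N v" and "x \<in> N"
  shows "\<phi> N v [x] x = v {x}"
  using assms(1)[unfolded non_wasteful_def, rule_format, of N v "[x]"] assms(2-4) by simp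

lemma share_second_le:
  assumes "non_wasteful mn mx \<phi>" and "irrevocable mn mx \<phi>"
    and "finite N" and "in_V_ge3 mn mx N v" and "x \<in> N" and "y \<in> N" and "x \<noteq> y"
  shows "\<phi> N v [y, x] x \<le> v {x, y} - v {y}"
proof -
  have "\<phi> N v [y] y \<le> \<phi> N v [y, x] y"
    using assms(2)[unfolded irrevocable_def, rule_format, of N v "[y]" "[x]" y] assms(3-7)
    by simp
  moreover have "\<phi> N v [y, x] y + \<phi> N v [y, x] x = v {x, y}"
    using assms(1)[unfolded non_wasteful_def, rule_format, of N v "[y, x]"] assms(3-7)
    by (simp add: insert_commute)
  ultimately show ?thesis
    using share_singleton[OF assms(1,3,4,6)] by simp
qed

definition grand_coalition_game :: "real \<Rightarrow> real \<Rightarrow> nat set \<Rightarrow> real" where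
  "grand_coalition_game mn mx S = (if S = {} then 0 else if S = {0, 1, 2} then mx else mn)"

lemma grand_coalition_game_in_V_ge3:
  assumes "0 < mn" and "3 * mn \<le> mx"
  shows "in_V_ge3 mn mx {0, 1, 2} (grand_coalition_game mn mx)"
proof -
  define \<delta> where "\<delta> = nat \<lfloor>mx / mn\<rfloor>"
  have "3 \<le> mx / mn"
    using assms by (simp add: field_simps)
  then have "3 \<le> \<delta>" and "real \<delta> \<le> mx / mn" and "mx / mn < real \<delta> + 1"
    unfolding \<delta>_def by linarith+
  then have "3 \<le> \<delta>" and "real \<delta> * mn \<le> mx" and "mx < (real \<delta> + 1) * mn"
    using assms(1) by (simp_all add: field_simps)
  moreover have "bounded_monotone mn mx {0, 1, 2} (grand_coalition_game mn mx)"
    using assms unfolding bounded_monotone_def grand_coalition_game_def by auto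
  ultimately show ?thesis
    unfolding in_V_ge3_def in_V_def by blast
qed

lemma grand_coalition_game_pair: "grand_coalition_game mn mx {x, y} = mn"
proof -
  have "card {x, y} < card {0, 1, 2 :: nat}"
    by (simp add: card_insert_if)
  then show ?thesis
    unfolding grand_coalition_game_def by auto
qed

theorem theorem2:
  fixes mn mx :: real and \<phi> :: policy and sel :: tiebreak
  assumes "0 < mn" and "mn \<le> mx" and "3 * mn \<le> mx"
    and "non_wasteful mn mx \<phi>" and "irrevocable mn mx \<phi>"
    and "valid_tiebreak sel"
  shows "competitive_ratio mn mx \<phi> sel \<le> 3 * mn / mx"
proof -
  define N :: "nat set" where "N = {0, 1, 2}"
  define v where "v = grand_coalition_game mn mx"
  have N: "finite N" "N \<noteq> {}" "arrival_order N [0, 1, 2]"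
    by (simp_all add: N_def arrival_order_def)
  have v: "in_V_ge3 mn mx N v"
    using grand_coalition_game_in_V_ge3[OF assms(1,3)] by (simp add: N_def v_def)
  have "\<phi> N v [y, x] x < \<phi> N v [x] x" if "x \<in> N" "y \<in> N" "x \<noteq> y" for x y
    using share_second_le[OF assms(4,5) N(1) v that(1,2,3)] share_singleton[OF assms(4) N(1) v that(1)]
      grand_coalition_game_pair[of mn mx x x] grand_coalition_game_pair[of mn mx y y] assms(1)
    by (simp add: v_def grand_coalition_game_pair)
  then have "greedy_structure \<phi> sel N v [0, 1, 2] = {{0}, {1}, {2}}"
    using greedy_structure_singletons[OF assms(6), of "[0, 1, 2]" \<phi> N v] by (simp add: N_def)
  then have "competitive_ratio mn mx \<phi> sel \<le> SW {{0}, {1}, {2}} v / opt_SW N v"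
    using competitive_ratio_le[OF assms(6) N(1,2) v N(3), where \<phi> = \<phi>] by simp
  also have "\<dots> = 3 * mn / opt_SW N v"
    by (simp add: SW_def v_def grand_coalition_game_def)
  also have "\<dots> \<le> 3 * mn / mx"
    using opt_SW_ge_grand_coalition[OF N(1,2), of v] assms(1,2)
    by (intro divide_left_mono) (simp_all add: N_def v_def grand_coalition_game_def)
  finally show ?thesis .
qed

end
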